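(* A (finite) tree $T$ is semi--H--cordial if and only if $T$ has an odd number of vertices.
   Context: A labeling of a graph $G$ is a map $f:E(G)\to\{-1,+1\}$. Given a labeling $f$, for each vertex $v$ define $f(v)=\sum_{e\in I(v)} f(e)$, where $I(v)$ is the set of edges incident to $v$. For an integer $c$, $e_f(c)$ denotes the number of edges with label $c$, and $v_f(c)$ the number of vertices $v$ with $f(v)=c$. A labeling $f$ of a tree $T$ is semi--H--cordial if $|f(v)|\le 1$ for every vertex $v$, $|e_f(1)-e_f(-1)|\le 1$, and $|v_f(1)-v_f(-1)|\le 1$. A tree is semi--H--cordial if it admits a semi--H--cordial labeling. *)

theory Defs
  imports Main
begin

definition simple_graph :: "'a set \<Rightarrow> 'a set set \<Rightarrow> bool" where
  "simple_graph V E \<longleftrightarrow> finite V \<and> (\<forall>e\<in>E. e \<subseteq> V \<and> card e = 2)"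

definition adj :: "'a set set \<Rightarrow> 'a \<Rightarrow> 'a \<Rightarrow> bool" where
  "adj E u v \<longleftrightarrow> {u, v} \<in> E"

definition connected_graph :: "'a set \<Rightarrow> 'a set set \<Rightarrow> bool" where
  "connected_graph V E \<longleftrightarrow> (\<forall>u\<in>V. \<forall>v\<in>V. (adj E)\<^sup>*\<^sup>* u v)"

definition is_cycle :: "'a set set \<Rightarrow> 'a list \<Rightarrow> bool" where
  "is_cycle E cs \<longleftrightarrow> length cs \<ge> 3 \<and> distinct cs
     \<and> (\<forall>i. Suc i < length cs \<longrightarrow> adj E (cs ! i) (cs ! Suc i))
     \<and> adj E (last cs) (hd cs)"

definition acyclic_graph :: "'a set set \<Rightarrow> bool" where
  "acyclic_graph E \<longleftrightarrow> \<not> (\<exists>cs. is_cycle E cs)"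

definition is_tree :: "'a set \<Rightarrow> 'a set set \<Rightarrow> bool" where
  "is_tree V E \<longleftrightarrow> simple_graph V E \<and> V \<noteq> {} \<and> connected_graph V E \<and> acyclic_graph E"

definition labeling :: "'a set set \<Rightarrow> ('a set \<Rightarrow> int) \<Rightarrow> bool" where
  "labeling E f \<longleftrightarrow> (\<forall>e\<in>E. f e \<in> {-1, 1})"

definition vlabel :: "'a set set \<Rightarrow> ('a set \<Rightarrow> int) \<Rightarrow> 'a \<Rightarrow> int" where
  "vlabel E f v = (\<Sum>e\<in>{e\<in>E. v \<in> e}. f e)"

definition e_f :: "'a set set \<Rightarrow> ('a set \<Rightarrow> int) \<Rightarrow> int \<Rightarrow> nat" where
  "e_f E f c = card {e\<in>E. f e = c}"

definition v_f :: "'a set \<Rightarrow> 'a set set \<Rightarrow> ('a set \<Rightarrow> int) \<Rightarrow> int \<Rightarrow> nat" where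
  "v_f V E f c = card {v\<in>V. vlabel E f v = c}"

definition semi_H_cordial_labeling :: "'a set \<Rightarrow> 'a set set \<Rightarrow> ('a set \<Rightarrow> int) \<Rightarrow> bool" where
  "semi_H_cordial_labeling V E f \<longleftrightarrow> labeling E f
     \<and> (\<forall>v\<in>V. \<bar>vlabel E f v\<bar> \<le> 1)
     \<and> \<bar>int (e_f E f 1) - int (e_f E f (-1))\<bar> \<le> 1
     \<and> \<bar>int (v_f V E f 1) - int (v_f V E f (-1))\<bar> \<le> 1"

definition semi_H_cordial :: "'a set \<Rightarrow> 'a set set \<Rightarrow> bool" where
  "semi_H_cordial V E \<longleftrightarrow> (\<exists>f. semi_H_cordial_labeling V E f)"

end

theory Submission
  imports Defs
begin

(* Summing the vertex labels counts every edge label twice, so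
   v_f(1) - v_f(-1) = 2 (e_f(1) - e_f(-1)) whenever all vertex labels lie in {-1, 0, 1}.
   The vertex condition of a semi-H-cordial labeling therefore forces e_f(1) = e_f(-1), so the
   tree has an even number |V| - 1 of edges.
   Conversely, every tree has a labeling with all vertex labels in {-1, 0, 1} and edge sum in
   {-1, 0, 1}. This is proved by induction on |V|: the first two vertices x0 x1 of a longest
   path show that the tree is a single edge, or x1 carries a second leaf, or x1 has degree two.
   In the last two cases two vertices are removed, and the labeling of the smaller tree is
   extended by labels -s, s along a path x0 - x1 - b, which leaves the edge sum and the label
   of x1 unchanged; s is chosen to keep the label of b in range. Since the edge sum has the
   parity of |E|, it vanishes when |E| is even, and then the labeling is semi-H-cordial. *)

section \<open>Simple graphs and trees\<close>

lemma adj_commute: "adj E u v \<longleftrightarrow> adj E v u"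
  by (simp add: adj_def insert_commute)

lemma adj_Diff_singleton: "adj (E - {e}) u v \<longleftrightarrow> adj E u v \<and> {u, v} \<noteq> e"
  by (auto simp: adj_def)

lemma simple_graph_adjD:
  "simple_graph V E \<Longrightarrow> adj E u v \<Longrightarrow> u \<in> V \<and> v \<in> V \<and> u \<noteq> v"
  unfolding simple_graph_def adj_def by (cases "u = v") auto

lemma simple_graph_finite_edges: "simple_graph V E \<Longrightarrow> finite E"
  unfolding simple_graph_def by (rule finite_subset[of E "Pow V"]) auto

lemma simple_graph_edgeE:
  assumes "simple_graph V E" "e \<in> E"
  obtains a b where "e = {a, b}" "a \<noteq> b"
  using assms unfolding simple_graph_def by (auto simp: card_2_iff)

lemma tree_simple_graph: "is_tree V E \<Longrightarrow> simple_graph V E"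
  by (simp add: is_tree_def)

lemma tree_finite: "is_tree V E \<Longrightarrow> finite V \<and> finite E"
  using simple_graph_finite_edges by (auto simp: is_tree_def simple_graph_def)

lemma tree_no_cycle: "is_tree V E \<Longrightarrow> \<not> is_cycle E cs"
  unfolding is_tree_def acyclic_graph_def by blast

lemma acyclic_graph_subset: "acyclic_graph E \<Longrightarrow> E' \<subseteq> E \<Longrightarrow> acyclic_graph E'"
  unfolding acyclic_graph_def is_cycle_def adj_def by blast

lemma tree_one_vertex:
  assumes T: "is_tree V E" and "card V < 2"
  shows "card V = 1" "E = {}"
proof -
  have fin: "finite V" and "V \<noteq> {}" using T by (auto simp: is_tree_def simple_graph_def)
  then have "0 < card V" by (simp add: card_gt_0_iff)
  then show "card V = 1" using \<open>card V < 2\<close> by linarith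
  show "E = {}"
  proof (rule ccontr)
    assume "E \<noteq> {}"
    then obtain e where "e \<subseteq> V" "card e = 2" using T by (auto simp: is_tree_def simple_graph_def)
    then have "card e \<le> card V" using card_mono[OF fin] by blast
    then show False using \<open>card e = 2\<close> \<open>card V = 1\<close> by simp
  qed
qed

definition pendant :: "'a set set \<Rightarrow> 'a \<Rightarrow> 'a \<Rightarrow> bool" where
  "pendant E v w \<longleftrightarrow> adj E v w \<and> (\<forall>z. adj E v z \<longrightarrow> z = w)"

lemma pendant_edge_mem: "pendant E v w \<Longrightarrow> {v, w} \<in> E"
  by (simp add: pendant_def adj_def)

lemma simple_graph_pendantD: "simple_graph V E \<Longrightarrow> pendant E v w \<Longrightarrow> v \<in> V \<and> v \<noteq> w"
  using simple_graph_adjD by (fastforce simp: pendant_def)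

lemma simple_graph_pendant_edge:
  assumes "simple_graph V E" "pendant E v w" "e \<in> E" "v \<in> e"
  shows "e = {v, w}"
proof -
  obtain a b where e: "e = {a, b}" "a \<noteq> b"
    using simple_graph_edgeE[OF assms(1,3)] .
  then have "adj E v (if a = v then b else a)"
    using assms(3,4) by (auto simp: adj_def insert_commute)
  then show ?thesis
    using assms(2,4) e unfolding pendant_def by (auto split: if_splits)
qed

lemma pendant_Diff_edge: "pendant E v w \<Longrightarrow> {v, w} \<noteq> e \<Longrightarrow> pendant (E - {e}) v w"
  by (simp add: pendant_def adj_Diff_singleton)

lemma connected_graph_remove_pendant:
  assumes conn: "connected_graph V E" and vw: "pendant E v w"
  shows "connected_graph (V - {v}) (E - {{v, w}})"
  unfolding connected_graph_def
proof (intro ballI)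
  let ?E = "E - {{v, w}}"
  have leaf: "\<And>z. adj E v z \<Longrightarrow> z = w" using vw by (simp add: pendant_def)
  fix u u' assume u: "u \<in> V - {v}" and u': "u' \<in> V - {v}"
  have "(adj E)\<^sup>*\<^sup>* u u'" using conn u u' unfolding connected_graph_def by blast
  \<comment> \<open>a walk from u can only enter v from w, and cannot leave v except back to w\<close>
  then have "(u' = v \<and> (adj ?E)\<^sup>*\<^sup>* u w) \<or> (u' \<noteq> v \<and> (adj ?E)\<^sup>*\<^sup>* u u')"
  proof (induction rule: rtranclp_induct)
    case base
    then show ?case using u by auto
  next
    case (step y z)
    show ?case
    proof (cases "y = v")
      case True
      then show ?thesis using step leaf by auto
    next
      case False
      then have IH: "(adj ?E)\<^sup>*\<^sup>* u y" using step by auto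
      show ?thesis
      proof (cases "z = v")
        case True
        then have "y = w" using step(2) leaf adj_commute by metis
        then show ?thesis using IH True by auto
      next
        case False
        then have "adj ?E y z"
          using step(2) \<open>y \<noteq> v\<close> by (auto simp: adj_Diff_singleton doubleton_eq_iff)
        then show ?thesis using IH False by auto
      qed
    qed
  qed
  then show "(adj ?E)\<^sup>*\<^sup>* u u'" using u' by auto
qed

lemma tree_remove_pendant:
  assumes T: "is_tree V E" and vw: "pendant E v w"
  shows "is_tree (V - {v}) (E - {{v, w}})"
proof -
  have sg: "simple_graph V E" using tree_simple_graph[OF T] .
  have "w \<in> V" "v \<noteq> w" using simple_graph_adjD[OF sg] vw by (auto simp: pendant_def)
  moreover have "simple_graph (V - {v}) (E - {{v, w}})"
    using sg simple_graph_pendant_edge[OF sg vw] unfolding simple_graph_def by blast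
  moreover have "acyclic_graph (E - {{v, w}})"
    using T acyclic_graph_subset unfolding is_tree_def by blast
  moreover have "connected_graph V E" using T by (simp add: is_tree_def)
  then have "connected_graph (V - {v}) (E - {{v, w}})" by (rule connected_graph_remove_pendant[OF _ vw])
  ultimately show ?thesis unfolding is_tree_def by blast
qed

section \<open>Longest paths in trees\<close>

definition graph_path :: "'a set \<Rightarrow> 'a set set \<Rightarrow> 'a list \<Rightarrow> bool" where
  "graph_path V E P \<longleftrightarrow> distinct P \<and> set P \<subseteq> V
     \<and> (\<forall>k. Suc k < length P \<longrightarrow> adj E (P ! k) (P ! Suc k))"

definition longest_path :: "'a set \<Rightarrow> 'a set set \<Rightarrow> 'a list \<Rightarrow> bool" where
  "longest_path V E P \<longleftrightarrow> graph_path V E P \<and> (\<forall>Q. graph_path V E Q \<longrightarrow> length Q \<le> length P)"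

lemma graph_path_length: "finite V \<Longrightarrow> graph_path V E P \<Longrightarrow> length P \<le> card V"
  unfolding graph_path_def by (metis card_mono distinct_card)

lemma graph_path_segment: "graph_path V E P \<Longrightarrow> graph_path V E (take n (drop i P))"
  unfolding graph_path_def by (auto dest: in_set_takeD in_set_dropD)

lemma graph_path_Cons:
  assumes "graph_path V E P" "z \<in> V" "z \<notin> set P" "P \<noteq> []" "adj E z (hd P)"
  shows "graph_path V E (z # P)"
  using assms unfolding graph_path_def by (auto simp: nth_Cons hd_conv_nth split: nat.split)

lemma graph_path_closed_is_cycle:
  "graph_path V E P \<Longrightarrow> 3 \<le> length P \<Longrightarrow> adj E (last P) (hd P) \<Longrightarrow> is_cycle E P"
  unfolding graph_path_def is_cycle_def by blast

lemma tree_path_no_chord: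
  assumes T: "is_tree V E" and P: "graph_path V E P" and ij: "i + 2 \<le> j" "j < length P"
  shows "\<not> adj E (P ! i) (P ! j)"
proof
  assume chord: "adj E (P ! i) (P ! j)"
  let ?Q = "take (Suc j - i) (drop i P)"
  have "hd ?Q = P ! i" "last ?Q = P ! j"
    using ij by (auto simp: hd_conv_nth last_conv_nth)
  moreover have "3 \<le> length ?Q" using ij by auto
  ultimately have "is_cycle E ?Q"
    using graph_path_closed_is_cycle[OF graph_path_segment[OF P]] chord adj_commute by metis
  then show False using tree_no_cycle[OF T] by blast
qed

lemma tree_path_adj_consecutive:
  assumes T: "is_tree V E" and P: "graph_path V E P" and ij: "i < length P" "j < length P"
    and adj: "adj E (P ! i) (P ! j)"
  shows "j = Suc i \<or> i = Suc j"
proof -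
  have "i \<noteq> j" using simple_graph_adjD[OF tree_simple_graph[OF T] adj] by blast
  moreover have "\<not> i + 2 \<le> j" using tree_path_no_chord[OF T P _ ij(2)] adj by blast
  moreover have "\<not> j + 2 \<le> i" using tree_path_no_chord[OF T P _ ij(1)] adj adj_commute by metis
  ultimately show ?thesis by linarith
qed

lemma tree_path_single_attachment:
  assumes T: "is_tree V E" and P: "graph_path V E P" and y: "y \<notin> set P"
    and ij: "i < j" "j < length P" and yi: "adj E y (P ! i)"
  shows "\<not> adj E y (P ! j)"
proof
  assume yj: "adj E y (P ! j)"
  let ?Q = "take (Suc j - i) (drop i P)"
  have Q: "graph_path V E ?Q" using graph_path_segment[OF P] .
  have hd: "hd ?Q = P ! i" and last: "last ?Q = P ! j"
    using ij by (auto simp: hd_conv_nth last_conv_nth)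
  have "y \<in> V" using simple_graph_adjD[OF tree_simple_graph[OF T] yi] by blast
  moreover have "y \<notin> set ?Q" using y by (auto dest: in_set_takeD in_set_dropD)
  moreover have "?Q \<noteq> []" using ij by simp
  ultimately have "graph_path V E (y # ?Q)"
    using graph_path_Cons[OF Q] yi hd by simp
  moreover have "3 \<le> length (y # ?Q)" using ij by simp
  moreover have "adj E (last (y # ?Q)) (hd (y # ?Q))"
    using last yj \<open>?Q \<noteq> []\<close> adj_commute[of E y] by simp
  ultimately have "is_cycle E (y # ?Q)"
    by (rule graph_path_closed_is_cycle)
  then show False using tree_no_cycle[OF T] by blast
qed

lemma tree_longest_path_exists:
  assumes T: "is_tree V E" and V: "2 \<le> card V"
  obtains P where "longest_path V E P" "2 \<le> length P"
proof -
  have sg: "simple_graph V E" and fin: "finite V" using T by (auto simp: is_tree_def simple_graph_def)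
  have "\<not> card V \<le> Suc 0" using V by simp
  then obtain u u' where u: "u \<in> V" "u' \<in> V" "u \<noteq> u'"
    using card_le_Suc0_iff_eq[OF fin] by blast
  then have "(adj E)\<^sup>*\<^sup>* u u'" using T unfolding is_tree_def connected_graph_def by blast
  then obtain z where z: "adj E u z" using u(3) by (metis converse_rtranclpE)
  then have "graph_path V E [u, z]"
    using simple_graph_adjD[OF sg z] by (auto simp: graph_path_def less_Suc_eq)
  then obtain P where "graph_path V E P" "\<forall>Q. graph_path V E Q \<longrightarrow> length Q \<le> length P"
    using ex_has_greatest_nat[of "graph_path V E" _ length "Suc (card V)"]
      graph_path_length[OF fin] by (metis le_imp_less_Suc)
  moreover have "2 \<le> length P" using \<open>graph_path V E [u, z]\<close> calculation(2) by fastforce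
  ultimately show ?thesis using that unfolding longest_path_def by blast
qed

lemma longest_path_start_pendant:
  assumes T: "is_tree V E" and P: "longest_path V E P" "2 \<le> length P"
  shows "pendant E (P ! 0) (P ! 1)"
  unfolding pendant_def
proof (intro conjI allI impI)
  have path: "graph_path V E P" using P(1) by (simp add: longest_path_def)
  then show "adj E (P ! 0) (P ! 1)" using P(2) by (simp add: graph_path_def)
  fix z assume z: "adj E (P ! 0) z"
  have sg: "simple_graph V E" using tree_simple_graph[OF T] .
  show "z = P ! 1"
  proof (cases "z \<in> set P")
    case True
    then obtain j where j: "j < length P" "z = P ! j" by (auto simp: in_set_conv_nth)
    moreover have "0 < length P" using P(2) by linarith
    ultimately show ?thesis using tree_path_adj_consecutive[OF T path _ j(1), of 0] z by auto
  next
    case False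
    \<comment> \<open>otherwise z # P would be a longer path\<close>
    have "P \<noteq> []" using P(2) by auto
    have "graph_path V E (z # P)"
      by (rule graph_path_Cons[OF path])
        (use False simple_graph_adjD[OF sg z] z \<open>P \<noteq> []\<close> in \<open>auto simp: adj_commute hd_conv_nth\<close>)
    then show ?thesis using P(1) by (fastforce simp: longest_path_def)
  qed
qed

lemma longest_path_offpath_neighbour_pendant:
  assumes T: "is_tree V E" and P: "longest_path V E P" "2 \<le> length P"
    and y: "adj E (P ! 1) y" "y \<notin> set P"
  shows "pendant E y (P ! 1)"
  unfolding pendant_def
proof (intro conjI allI impI)
  have path: "graph_path V E P" using P(1) by (simp add: longest_path_def)
  have sg: "simple_graph V E" using tree_simple_graph[OF T] .
  show y1: "adj E y (P ! 1)" using y(1) adj_commute by metis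
  fix z assume z: "adj E y z"
  show "z = P ! 1"
  proof (cases "z \<in> set P")
    case True
    then obtain j where j: "j < length P" "z = P ! j" by (auto simp: in_set_conv_nth)
    show ?thesis
    proof (rule ccontr)
      assume "z \<noteq> P ! 1"
      then have "j \<noteq> 1" using j by auto
      then consider "j < 1" | "1 < j" by linarith
      then show False
        using tree_path_single_attachment[OF T path y(2)] y1 z j P(2) by cases auto
    qed
  next
    case False
    \<comment> \<open>otherwise z # y # drop 1 P would be a longer path\<close>
    have "graph_path V E (drop 1 P)"
      using graph_path_segment[OF path, of "length P" 1] by simp
    then have "graph_path V E (y # drop 1 P)"
      by (rule graph_path_Cons) (use y simple_graph_adjD[OF sg y(1)] P(2) in
          \<open>auto simp: hd_drop_conv_nth adj_commute dest: in_set_dropD\<close>)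
    then have "graph_path V E (z # y # drop 1 P)"
      by (rule graph_path_Cons) (use False simple_graph_adjD[OF sg z] z in
          \<open>auto simp: adj_commute dest: in_set_dropD\<close>)
    then show ?thesis using P by (fastforce simp: longest_path_def)
  qed
qed

lemma tree_pendant_cases:
  assumes T: "is_tree V E" and V: "2 \<le> card V"
  obtains (twin_leaves) x0 x1 y where "pendant E x0 x1" "pendant E y x1" "y \<noteq> x0"
  | (single_edge) x0 x1 where "pendant E x0 x1" "pendant E x1 x0"
  | (degree_two) x0 x1 x2 where "pendant E x0 x1" "x2 \<noteq> x0" "adj E x1 x2"
      "\<forall>z. adj E x1 z \<longrightarrow> z = x0 \<or> z = x2"
proof -
  obtain P where P: "longest_path V E P" "2 \<le> length P"
    using tree_longest_path_exists[OF T V] .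
  have path: "graph_path V E P" using P(1) by (simp add: longest_path_def)
  have start: "pendant E (P ! 0) (P ! 1)" using longest_path_start_pendant[OF T P] .
  show ?thesis
  proof (cases "\<exists>y. adj E (P ! 1) y \<and> y \<notin> set P")
    case True
    then obtain y where y: "adj E (P ! 1) y" "y \<notin> set P" by blast
    moreover have "P ! 0 \<in> set P" using P(2) by (auto intro: nth_mem)
    ultimately show ?thesis
      using twin_leaves[OF start longest_path_offpath_neighbour_pendant[OF T P y]] by blast
  next
    case False
    have nbrs: "z = P ! 0 \<or> (2 < length P \<and> z = P ! 2)" if "adj E (P ! 1) z" for z
    proof -
      have "z \<in> set P" using False that by blast
      then obtain j where j: "j < length P" "z = P ! j" by (auto simp: in_set_conv_nth)
      then show ?thesis
        using tree_path_adj_consecutive[OF T path _ j(1), of 1] that P(2) by (auto simp: numeral_2_eq_2)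
    qed
    show ?thesis
    proof (cases "2 < length P")
      case True
      have "adj E (P ! 1) (P ! 2)" using path True by (auto simp: graph_path_def numeral_2_eq_2)
      moreover have "P ! 2 \<noteq> P ! 0"
        using path True unfolding graph_path_def
        by (metis nth_eq_iff_index_eq less_trans zero_less_numeral zero_neq_numeral)
      ultimately show ?thesis using degree_two[OF start] nbrs by blast
    next
      case False
      then have "pendant E (P ! 1) (P ! 0)"
        using start nbrs unfolding pendant_def by (metis adj_commute)
      then show ?thesis by (rule single_edge[OF start])
    qed
  qed
qed

lemma tree_card_edges: "is_tree V E \<Longrightarrow> card V = card E + 1"
proof (induction "card V" arbitrary: V E rule: less_induct)
  case less
  note T = less.prems
  have fin: "finite V" using tree_finite[OF T] by blast
  show ?case
  proof (cases "2 \<le> card V")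
    case False
    then show ?thesis using tree_one_vertex[OF T] by simp
  next
    case True
    obtain v w where vw: "pendant E v w"
      by (rule tree_pendant_cases[OF T True]) blast+
    have v: "v \<in> V" using simple_graph_pendantD[OF tree_simple_graph[OF T] vw] by blast
    have "card (V - {v}) = card (E - {{v, w}}) + 1"
      by (rule less.hyps[OF card_Diff1_less[OF fin v] tree_remove_pendant[OF T vw]])
    moreover have "card E > 0" using pendant_edge_mem[OF vw] tree_finite[OF T] card_gt_0_iff by blast
    ultimately show ?thesis using v pendant_edge_mem[OF vw] True by (simp add: card_Diff_singleton)
  qed
qed

section \<open>Balanced labelings\<close>

lemma vlabel_no_incident_edge: "\<forall>e\<in>E. v \<notin> e \<Longrightarrow> vlabel E f v = 0"
  unfolding vlabel_def by (intro sum.neutral) blast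

lemma vlabel_insert_edge:
  assumes "finite E" "e \<notin> E"
  shows "vlabel (insert e E) (f(e := s)) v = vlabel E f v + (if v \<in> e then s else 0)"
proof -
  have incident: "{e'\<in>insert e E. v \<in> e'} =
      (if v \<in> e then insert e {e'\<in>E. v \<in> e'} else {e'\<in>E. v \<in> e'})"
    by auto
  have "(\<Sum>e'\<in>{e'\<in>E. v \<in> e'}. (f(e := s)) e') = vlabel E f v"
    unfolding vlabel_def using assms(2) by (intro sum.cong) auto
  then show ?thesis using assms unfolding vlabel_def incident by (simp add: add.commute)
qed

lemma sum_insert_edge:
  assumes "finite E" "e \<notin> E"
  shows "(\<Sum>e'\<in>insert e E. (f(e := s)) e') = (\<Sum>e'\<in>E. f e') + s"
proof -
  have "(\<Sum>e'\<in>E. (f(e := s)) e') = (\<Sum>e'\<in>E. f e')"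
    using assms(2) by (intro sum.cong) auto
  then show ?thesis using assms by (simp add: add.commute)
qed

definition balanced_labeling :: "'a set set \<Rightarrow> ('a set \<Rightarrow> int) \<Rightarrow> bool" where
  "balanced_labeling E f \<longleftrightarrow> labeling E f \<and> (\<forall>v. \<bar>vlabel E f v\<bar> \<le> 1) \<and> \<bar>\<Sum>e\<in>E. f e\<bar> \<le> 1"

lemma balanced_labeling_empty: "balanced_labeling {} (\<lambda>_. 1)"
  by (simp add: balanced_labeling_def labeling_def vlabel_def)

lemma balanced_labeling_insert_isolated_edge:
  assumes fin: "finite E" and f: "balanced_labeling E f"
    and isolated: "\<forall>e\<in>E. a \<notin> e" "\<forall>e\<in>E. b \<notin> e"
  shows "\<exists>g. balanced_labeling (insert {a, b} E) g"
proof -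
  define s :: int where "s = (if (\<Sum>e\<in>E. f e) \<ge> 1 then -1 else 1)"
  have new: "{a, b} \<notin> E" using isolated(1) by blast
  have "vlabel E f a = 0" "vlabel E f b = 0"
    using isolated by (simp_all add: vlabel_no_incident_edge)
  then have "\<bar>vlabel (insert {a, b} E) (f({a, b} := s)) v\<bar> \<le> 1" for v
    using f vlabel_insert_edge[OF fin new, of f s v]
    by (auto simp: balanced_labeling_def s_def)
  moreover have "\<bar>\<Sum>e\<in>insert {a, b} E. (f({a, b} := s)) e\<bar> \<le> 1"
    using f sum_insert_edge[OF fin new, of f s] by (auto simp: balanced_labeling_def s_def)
  moreover have "labeling (insert {a, b} E) (f({a, b} := s))"
    using f by (auto simp: balanced_labeling_def labeling_def s_def)
  ultimately show ?thesis unfolding balanced_labeling_def by blast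
qed

lemma balanced_labeling_insert_path2:
  assumes fin: "finite E" and f: "balanced_labeling E f"
    and a: "\<forall>e\<in>E. a \<notin> e" "a \<noteq> m" "a \<noteq> b" and mb: "{m, b} \<notin> E"
  shows "\<exists>g. balanced_labeling (insert {a, m} (insert {m, b} E)) g"
proof -
  \<comment> \<open>the labels -s and s on the path a - m - b cancel at m and in the edge sum\<close>
  define s :: int where "s = (if vlabel E f b = 1 then -1 else 1)"
  define g where "g = (f({m, b} := s))({a, m} := -s)"
  have am: "{a, m} \<notin> insert {m, b} E" using a by (auto simp: doubleton_eq_iff)
  have vl: "vlabel (insert {a, m} (insert {m, b} E)) g v
      = vlabel E f v + (if v \<in> {m, b} then s else 0) + (if v \<in> {a, m} then -s else 0)" for v
    unfolding g_def using fin mb am by (simp add: vlabel_insert_edge)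
  have bound: "\<bar>vlabel E f v\<bar> \<le> 1" for v using f by (simp add: balanced_labeling_def)
  have "vlabel E f a = 0" using a(1) by (rule vlabel_no_incident_edge)
  then have vertex_bound: "\<bar>vlabel (insert {a, m} (insert {m, b} E)) g v\<bar> \<le> 1" for v
    using vl[of v] bound[of v] bound[of b] a(2,3) by (auto simp: s_def abs_le_iff)
  have "(\<Sum>e\<in>insert {a, m} (insert {m, b} E). g e) = (\<Sum>e\<in>insert {m, b} E. (f({m, b} := s)) e) - s"
    unfolding g_def using fin am by (subst sum_insert_edge) auto
  also have "\<dots> = (\<Sum>e\<in>E. f e)" by (subst sum_insert_edge[OF fin mb]) simp
  finally have "(\<Sum>e\<in>insert {a, m} (insert {m, b} E). g e) = (\<Sum>e\<in>E. f e)" .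
  moreover have "labeling (insert {a, m} (insert {m, b} E)) g"
    using f by (auto simp: balanced_labeling_def labeling_def g_def s_def)
  ultimately show ?thesis using f vertex_bound unfolding balanced_labeling_def by auto
qed

lemma balanced_labeling_extend_pendant_pair:
  assumes sg: "simple_graph V E" and vw: "pendant E v w" "pendant E w v"
    and f: "balanced_labeling (E - {{v, w}}) f"
  shows "\<exists>g. balanced_labeling E g"
proof -
  have E: "E = insert {v, w} (E - {{v, w}})" using pendant_edge_mem[OF vw(1)] by blast
  have "\<forall>e\<in>E - {{v, w}}. v \<notin> e" "\<forall>e\<in>E - {{v, w}}. w \<notin> e"
    using simple_graph_pendant_edge[OF sg vw(1)] simple_graph_pendant_edge[OF sg vw(2)]
      insert_commute[of w v] by auto
  moreover have "finite (E - {{v, w}})" using simple_graph_finite_edges[OF sg] by blast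
  ultimately show ?thesis
    by (subst E) (rule balanced_labeling_insert_isolated_edge[OF _ f])
qed

lemma balanced_labeling_extend_pendant_path2:
  assumes sg: "simple_graph V E" and am: "pendant E a m" and uw: "pendant (E - {{a, m}}) u w"
    and mb: "{u, w} = {m, b}" "a \<noteq> b"
    and f: "balanced_labeling (E - {{a, m}} - {{u, w}}) f"
  shows "\<exists>g. balanced_labeling E g"
proof -
  let ?E2 = "E - {{a, m}} - {{u, w}}"
  have "E = insert {a, m} (insert {u, w} ?E2)"
    using pendant_edge_mem[OF am] pendant_edge_mem[OF uw] by (simp add: insert_absorb)
  then have E: "E = insert {a, m} (insert {m, b} ?E2)" unfolding mb(1) .
  have "\<forall>e\<in>?E2. a \<notin> e" using simple_graph_pendant_edge[OF sg am] by blast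
  moreover have "finite ?E2" using simple_graph_finite_edges[OF sg] by blast
  moreover have "a \<noteq> m" using simple_graph_pendantD[OF sg am] by blast
  moreover have "{m, b} \<notin> ?E2" using mb(1) by simp
  ultimately show ?thesis
    by (subst E) (rule balanced_labeling_insert_path2[OF _ f _ _ mb(2)])
qed

lemma tree_balanced_labeling_exists: "is_tree V E \<Longrightarrow> \<exists>f. balanced_labeling E f"
proof (induction "card V" arbitrary: V E rule: less_induct)
  case less
  note T = less.prems
  have sg: "simple_graph V E" using tree_simple_graph[OF T] .
  have IH: "\<exists>f. balanced_labeling E' f" if "is_tree V' E'" "V' \<subset> V" for V' E'
    using less.hyps that psubset_card_mono tree_finite[OF T] by blast
  have remove2: "\<exists>f. balanced_labeling (E - {{a, m}} - {{u, w}}) f"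
    if am: "pendant E a m" and uw: "pendant (E - {{a, m}}) u w" for a m u w
  proof -
    have T1: "is_tree (V - {a}) (E - {{a, m}})" using tree_remove_pendant[OF T am] .
    have "V - {a} - {u} \<subset> V" using simple_graph_pendantD[OF sg am] by blast
    then show ?thesis using IH[OF tree_remove_pendant[OF T1 uw]] by blast
  qed
  show ?case
  proof (cases "2 \<le> card V")
    case False
    then show ?thesis using tree_one_vertex[OF T] balanced_labeling_empty by auto
  next
    case True
    show ?thesis
      using T True
    proof (cases rule: tree_pendant_cases)
      case (twin_leaves x0 x1 y)
      have y: "pendant (E - {{x0, x1}}) y x1"
        by (rule pendant_Diff_edge[OF twin_leaves(2)]) (use twin_leaves(3) in \<open>auto simp: doubleton_eq_iff\<close>)
      show ?thesis
        using balanced_labeling_extend_pendant_path2[OF sg twin_leaves(1) y insert_commute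
            twin_leaves(3)[symmetric]] remove2[OF twin_leaves(1) y] by blast
    next
      case (single_edge x0 x1)
      have "V - {x0} \<subset> V" using simple_graph_pendantD[OF sg single_edge(1)] by blast
      then show ?thesis
        using balanced_labeling_extend_pendant_pair[OF sg single_edge]
          IH[OF tree_remove_pendant[OF T single_edge(1)]] by blast
    next
      case (degree_two x0 x1 x2)
      have x1: "pendant (E - {{x0, x1}}) x1 x2"
        using degree_two(2-4) by (auto simp: pendant_def adj_Diff_singleton doubleton_eq_iff)
      show ?thesis
        using balanced_labeling_extend_pendant_path2[OF sg degree_two(1) x1 refl
            degree_two(2)[symmetric]] remove2[OF degree_two(1) x1] by blast
    qed
  qed
qed

section \<open>Counting labels\<close>

lemma sum_vlabel_eq_twice_sum_labels:
  assumes "simple_graph V E"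
  shows "(\<Sum>v\<in>V. vlabel E f v) = 2 * (\<Sum>e\<in>E. f e)"
proof -
  have finV: "finite V" and edges: "\<And>e. e \<in> E \<Longrightarrow> e \<subseteq> V \<and> card e = 2"
    using assms by (auto simp: simple_graph_def)
  have "(\<Sum>v\<in>V. vlabel E f v) = (\<Sum>v\<in>V. \<Sum>e\<in>E. if v \<in> e then f e else 0)"
    unfolding vlabel_def
    by (intro sum.cong refl sum.inter_filter simple_graph_finite_edges[OF assms])
  also have "\<dots> = (\<Sum>e\<in>E. \<Sum>v\<in>V. if v \<in> e then f e else 0)" by (rule sum.swap)
  also have "\<dots> = (\<Sum>e\<in>E. 2 * f e)"
  proof (rule sum.cong[OF refl])
    fix e assume "e \<in> E"
    then have "{v\<in>V. v \<in> e} = e" "card e = 2" using edges by auto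
    then show "(\<Sum>v\<in>V. if v \<in> e then f e else 0) = 2 * f e"
      using sum.inter_filter[OF finV, of "\<lambda>_. f e" "\<lambda>v. v \<in> e"] by simp
  qed
  finally show ?thesis by (simp add: sum_distrib_left)
qed

lemma sum_eq_card_diff_if_abs_le_one:
  fixes g :: "'a \<Rightarrow> int"
  assumes "finite A" "\<forall>x\<in>A. \<bar>g x\<bar> \<le> 1"
  shows "(\<Sum>x\<in>A. g x) = int (card {x\<in>A. g x = 1}) - int (card {x\<in>A. g x = -1})"
proof -
  have "(\<Sum>x\<in>A. g x) = (\<Sum>x\<in>A. (if g x = 1 then 1 else 0) - (if g x = -1 then 1 else 0))"
    using assms(2) by (intro sum.cong) auto
  also have "\<dots> = int (card {x\<in>A. g x = 1}) - int (card {x\<in>A. g x = -1})"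
    by (simp add: sum_subtractf sum.inter_filter[symmetric] assms(1))
  finally show ?thesis .
qed

lemma e_f_diff:
  "finite E \<Longrightarrow> labeling E f \<Longrightarrow> int (e_f E f 1) - int (e_f E f (-1)) = (\<Sum>e\<in>E. f e)"
  unfolding e_f_def labeling_def by (subst sum_eq_card_diff_if_abs_le_one) auto

lemma e_f_add:
  assumes "finite E" "labeling E f"
  shows "e_f E f 1 + e_f E f (-1) = card E"
proof -
  have "card E = card ({e\<in>E. f e = 1} \<union> {e\<in>E. f e = -1})"
    using assms(2) by (intro arg_cong[where f = card]) (auto simp: labeling_def)
  also have "\<dots> = card {e\<in>E. f e = 1} + card {e\<in>E. f e = -1}"
    by (rule card_Un_disjoint) (use assms(1) in auto)
  finally show ?thesis unfolding e_f_def by simp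
qed

lemma v_f_diff:
  assumes "simple_graph V E" "\<forall>v\<in>V. \<bar>vlabel E f v\<bar> \<le> 1"
  shows "int (v_f V E f 1) - int (v_f V E f (-1)) = 2 * (\<Sum>e\<in>E. f e)"
  using sum_eq_card_diff_if_abs_le_one[of V "vlabel E f"] sum_vlabel_eq_twice_sum_labels[OF assms(1)]
    assms by (simp add: v_f_def simple_graph_def)

lemma even_sum_labels_iff:
  assumes "finite E" "labeling E f"
  shows "even (\<Sum>e\<in>E. f e) \<longleftrightarrow> even (card E)"
proof -
  have "(\<Sum>e\<in>E. f e) = int (card E) - 2 * int (e_f E f (-1))"
    using e_f_diff[OF assms] e_f_add[OF assms] by linarith
  then show ?thesis by simp
qed

lemma semi_H_cordial_labeling_iff_sum_zero:
  assumes "simple_graph V E" "labeling E f" "\<forall>v\<in>V. \<bar>vlabel E f v\<bar> \<le> 1"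
  shows "semi_H_cordial_labeling V E f \<longleftrightarrow> (\<Sum>e\<in>E. f e) = 0"
proof -
  have "\<bar>2 * s\<bar> \<le> 1 \<longleftrightarrow> s = 0" for s :: int unfolding abs_le_iff by presburger
  then show ?thesis
    using v_f_diff[OF assms(1,3)] e_f_diff[OF simple_graph_finite_edges[OF assms(1)] assms(2)] assms(2,3)
    unfolding semi_H_cordial_labeling_def by auto
qed

lemma semi_H_cordial_imp_even_card_edges:
  assumes sg: "simple_graph V E" and "semi_H_cordial V E"
  shows "even (card E)"
proof -
  obtain f where f: "semi_H_cordial_labeling V E f"
    using assms(2) by (auto simp: semi_H_cordial_def)
  then have lab: "labeling E f" and "\<forall>v\<in>V. \<bar>vlabel E f v\<bar> \<le> 1"
    by (auto simp: semi_H_cordial_labeling_def)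
  then have "(\<Sum>e\<in>E. f e) = 0" using f semi_H_cordial_labeling_iff_sum_zero[OF sg] by blast
  then show ?thesis using even_sum_labels_iff[OF simple_graph_finite_edges[OF sg] lab] by simp
qed

lemma balanced_labeling_semi_H_cordial:
  assumes sg: "simple_graph V E" and f: "balanced_labeling E f" and "even (card E)"
  shows "semi_H_cordial_labeling V E f"
proof -
  have lab: "labeling E f" and "\<forall>v\<in>V. \<bar>vlabel E f v\<bar> \<le> 1" "\<bar>\<Sum>e\<in>E. f e\<bar> \<le> 1"
    using f by (auto simp: balanced_labeling_def)
  moreover have "even (\<Sum>e\<in>E. f e)"
    using even_sum_labels_iff[OF simple_graph_finite_edges[OF sg] lab] \<open>even (card E)\<close> by blast
  ultimately have "(\<Sum>e\<in>E. f e) = 0" by presburger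
  then show ?thesis using semi_H_cordial_labeling_iff_sum_zero[OF sg lab] \<open>\<forall>v\<in>V. _\<close> by blast
qed

theorem theorem1:
  fixes V :: "'a set" and E :: "'a set set"
  assumes "is_tree V E"
  shows "semi_H_cordial V E \<longleftrightarrow> odd (card V)"
proof -
  have sg: "simple_graph V E" using tree_simple_graph[OF assms] .
  have "odd (card V) \<longleftrightarrow> even (card E)" using tree_card_edges[OF assms] by simp
  moreover obtain f where "balanced_labeling E f" using tree_balanced_labeling_exists[OF assms] by blast
  ultimately show ?thesis
    using semi_H_cordial_imp_even_card_edges[OF sg] balanced_labeling_semi_H_cordial[OF sg]
    by (auto simp: semi_H_cordial_def)
qed

end
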